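(* Consider the setting described in the context and assume $D>2$. For $t\ge 1$ let $\mathcal{I}_0(t)=\bigcup_{m=0}^{t-1}\mathcal{F}_0(m)$. Then for every $t\ge1$, $a_i(t)\le 2N$ for all $i\in\mathcal{I}_0(t)$.
   Context: $G=(V,E)$ is a finite connected undirected graph with node set $V=\{0,\dots,N-1\}$; $\mathcal{N}(i)$ denotes the set of neighbours of $i$. Every edge has length $1$, $d_{ij}$ is the hop distance between $i$ and $j$, and $\mathcal{F}_k(m)=\{i\in V : d_{ik}=m\}$. Every node carries value $v_i=1$. The source set is $S(t)=\{D-1\}$ for $t\le 0$ and $S(t)=\{0\}$ for $t\ge 1$. The integer $D$ satisfies $\max_{i\in V}d_{i0}=D-1$, and nodes are labelled so that $0,1,\dots,D-1$ is a path in which node $i$ is a neighbour of $i+1$ with $d_{0,i}=i$ for $0\le i\le D-1$. The algorithm updates, for $t\ge1$: $\hat d_i(t)=0$ if $i\in S(t)$, and $\hat d_i(t)=\min_{j\in\mathcal{N}(i)}\{\hat d_j(t-1)+1\}$ otherwise; $c_i(t)=i$ if $i\in S(t)$, and otherwise $c_i(t)$ is a minimizer $j\in\mathcal{N}(i)$ of $\hat d_j(t-1)+1$; $C_i(t)=\{j : c_j(t-1)=i \text{ and } \hat d_j(t-1)=\hat d_i(t)+1\}$; $a_i(t)=\sum_{j\in C_i(t)}a_j(t-1)+v_i$. Initial values $(\hat d_i(0),c_i(0),a_i(0))$ are steady-state values of these recursions when the source set is constantly $\{D-1\}$; in particular $\hat d_i(0)=m$ for all $i\in\mathcal{F}_{D-1}(m)$,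 and for every integer $m$, $\sum_{i\in\mathcal{F}_{D-1}(m)}a_i(0)\le N$. *)

theory Defs
  imports Main
begin

fun walk :: "(nat \<Rightarrow> nat \<Rightarrow> bool) \<Rightarrow> nat \<Rightarrow> nat \<Rightarrow> nat \<Rightarrow> bool" where
  "walk E 0 i j = (i = j)"
| "walk E (Suc n) i j = (\<exists>k. E i k \<and> walk E n k j)"

definition hopdist :: "(nat \<Rightarrow> nat \<Rightarrow> bool) \<Rightarrow> nat \<Rightarrow> nat \<Rightarrow> nat" where
  "hopdist E i j = (LEAST n. walk E n i j)"

definition nbrs :: "(nat \<Rightarrow> nat \<Rightarrow> bool) \<Rightarrow> nat \<Rightarrow> nat set" where
  "nbrs E i = {j. E i j}"

definition conn_graph :: "nat \<Rightarrow> (nat \<Rightarrow> nat \<Rightarrow> bool) \<Rightarrow> bool" where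
  "conn_graph N E \<longleftrightarrow>
     (\<forall>i j. E i j \<longrightarrow> i < N \<and> j < N) \<and>
     (\<forall>i j. E i j \<longleftrightarrow> E j i) \<and>
     (\<forall>i. \<not> E i i) \<and>
     (\<forall>i<N. \<forall>j<N. \<exists>n. walk E n i j)"

definition dupd :: "(nat \<Rightarrow> nat \<Rightarrow> bool) \<Rightarrow> (nat \<Rightarrow> nat) \<Rightarrow> nat \<Rightarrow> nat" where
  "dupd E dprev i = Min ((\<lambda>j. dprev j + 1) ` nbrs E i)"

text \<open>Children set C_i: nodes j (in V) with c_j(prev) = i and dhat_j(prev) = dhat_i(now) + 1.\<close>
definition Cset :: "nat \<Rightarrow> (nat \<Rightarrow> nat) \<Rightarrow> (nat \<Rightarrow> nat) \<Rightarrow> nat \<Rightarrow> nat \<Rightarrow> nat set" where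
  "Cset N cprev dprev di i = {j. j < N \<and> cprev j = i \<and> dprev j = di + 1}"

end

(* Call dh s x + s the potential of node x at time s. Unrolling the recursion for a shows
   that a t i is the number of (node, time) pairs, with time in 1..t, in the tree of
   contributors to i, plus the time-0 aggregates at the leaves of that tree. A child at
   time s has estimate one more than its parent at time s + 1, so the potential is constant
   along the tree and every pair has potential M = dh t i + t.

   A fixed node x attains M at most twice: while s <= d(x,0) the estimate dh s x is
   nondecreasing in s, so the potential is strictly increasing, and afterwards dh s x = d(x,0).
   The time-0 leaves at level M have, by the steady state, total aggregate at most the number
   of nodes x with dh 0 x >= M, and such an x never attains M in the first phase, where its
   potential exceeds dh 0 x. Thus a t i <= 2 N for every node and every time. *)

theory Submission
  imports Defs
begin

lemma walk_hopdist:
  assumes "conn_graph N E" "x < N" "y < N"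
  shows "walk E (hopdist E x y) x y"
proof -
  from assms obtain n where "walk E n x y" unfolding conn_graph_def by blast
  then show ?thesis unfolding hopdist_def by (rule LeastI)
qed

lemma hopdist_le_walk: "walk E n x y \<Longrightarrow> hopdist E x y \<le> n"
  unfolding hopdist_def by (rule Least_le)

lemma hopdist_self [simp]: "hopdist E x x = 0"
  using hopdist_le_walk[of E 0 x x] by simp

lemma hopdist_edge:
  assumes "conn_graph N E" "E x j" "y < N"
  shows "hopdist E x y \<le> hopdist E j y + 1"
proof -
  have "j < N" using assms unfolding conn_graph_def by blast
  then have "walk E (Suc (hopdist E j y)) x y"
    using walk_hopdist assms by auto
  then show ?thesis using hopdist_le_walk by fastforce
qed

lemma hopdist_step:
  assumes "conn_graph N E" "x < N" "y < N" "x \<noteq> y"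
  obtains j where "E x j" "hopdist E j y < hopdist E x y"
proof (cases "hopdist E x y")
  case 0
  then show ?thesis using walk_hopdist[OF assms(1-3)] assms(4) by simp
next
  case (Suc k)
  then obtain j where "E x j" "walk E k j y" using walk_hopdist[OF assms(1-3)] by auto
  then show ?thesis using that hopdist_le_walk Suc by fastforce
qed

lemma finite_nbrs: "conn_graph N E \<Longrightarrow> finite (nbrs E x)"
  by (rule finite_subset[of _ "{..<N}"]) (auto simp: conn_graph_def nbrs_def)

lemma dupd_le:
  assumes "conn_graph N E" "E x j"
  shows "dupd E f x \<le> f j + 1"
  unfolding dupd_def using assms finite_nbrs[OF assms(1)] by (intro Min_le) (auto simp: nbrs_def)

lemma le_dupd:
  assumes "conn_graph N E" "nbrs E x \<noteq> {}" "\<And>j. E x j \<Longrightarrow> m \<le> f j + 1"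
  shows "m \<le> dupd E f x"
  unfolding dupd_def using assms finite_nbrs[OF assms(1)] by (subst Min_ge_iff) (auto simp: nbrs_def)

lemma dupd_mono:
  assumes "conn_graph N E" "nbrs E x \<noteq> {}" "\<And>j. E x j \<Longrightarrow> f j \<le> g j"
  shows "dupd E f x \<le> dupd E g x"
proof (rule le_dupd[OF assms(1,2)])
  fix j assume "E x j"
  then show "dupd E f x \<le> g j + 1" using dupd_le[OF assms(1), of x j f] assms(3) by fastforce
qed

definition children ::
  "nat \<Rightarrow> (nat \<Rightarrow> nat) \<Rightarrow> (nat \<Rightarrow> nat) \<Rightarrow> (nat \<Rightarrow> nat) \<Rightarrow> nat set \<Rightarrow> nat set" where
  "children N c dprev dnow X = (\<Union>x\<in>X. Cset N c dprev (dnow x) x)"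

lemma mem_children [simp]:
  "j \<in> children N c dprev dnow X \<longleftrightarrow> j < N \<and> c j \<in> X \<and> dprev j = dnow (c j) + 1"
  by (auto simp: children_def Cset_def)

lemma sum_children:
  assumes "finite X"
    and "\<And>x. x \<in> X \<Longrightarrow> anow x = (\<Sum>j\<in>Cset N c dprev (dnow x) x. aprev j) + 1"
  shows "(\<Sum>x\<in>X. anow x) = card X + (\<Sum>j\<in>children N c dprev dnow X. aprev j)"
proof -
  have "(\<Sum>x\<in>X. anow x) = (\<Sum>x\<in>X. (\<Sum>j\<in>Cset N c dprev (dnow x) x. aprev j) + 1)"
    using assms(2) by (rule sum.cong[OF refl])
  also have "\<dots> = (\<Sum>x\<in>X. \<Sum>j\<in>Cset N c dprev (dnow x) x. aprev j) + card X"
    by (simp only: sum.distrib card_eq_sum)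
  also have "(\<Sum>x\<in>X. \<Sum>j\<in>Cset N c dprev (dnow x) x. aprev j) =
      (\<Sum>j\<in>children N c dprev dnow X. aprev j)"
    unfolding children_def using assms(1)
    by (intro sum.UNION_disjoint[symmetric]) (auto simp: Cset_def)
  finally show ?thesis by simp
qed

text \<open>Depth r of the tree below X at time t lives at time t - r.\<close>

primrec descendants ::
  "nat \<Rightarrow> (nat \<Rightarrow> nat \<Rightarrow> nat) \<Rightarrow> (nat \<Rightarrow> nat \<Rightarrow> nat) \<Rightarrow> nat \<Rightarrow> nat set \<Rightarrow> nat \<Rightarrow> nat set" where
  "descendants N c dh t X 0 = X"
| "descendants N c dh t X (Suc r) =
     children N (c (t - Suc r)) (dh (t - Suc r)) (dh (t - r)) (descendants N c dh t X r)"

lemma descendants_subset: "X \<subseteq> {..<N} \<Longrightarrow> descendants N c dh t X r \<subseteq> {..<N}"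
  by (induction r) auto

lemma descendants_potential:
  assumes "X \<subseteq> {x. dh t x + t = M}" "r \<le> t"
  shows "descendants N c dh t X r \<subseteq> {x. dh (t - r) x + (t - r) = M}"
  using assms(2)
proof (induction r)
  case (Suc r)
  show ?case
  proof
    fix j assume "j \<in> descendants N c dh t X (Suc r)"
    then have "dh (t - r) (c (t - Suc r) j) + (t - r) = M"
      and "dh (t - Suc r) j = dh (t - r) (c (t - Suc r) j) + 1"
      using Suc by auto
    then show "j \<in> {x. dh (t - Suc r) x + (t - Suc r) = M}"
      using Suc.prems by simp
  qed
qed (use assms(1) in simp)

lemma sum_descendants:
  assumes "X \<subseteq> {..<N}" "r \<le> t"
    and step: "\<And>s x. s < t \<Longrightarrow> x < N \<Longrightarrow>
      a (Suc s) x = (\<Sum>j\<in>Cset N (c s) (dh s) (dh (Suc s) x) x. a s j) + 1"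
  shows "(\<Sum>x\<in>X. a t x) =
    (\<Sum>q<r. card (descendants N c dh t X q)) + (\<Sum>x\<in>descendants N c dh t X r. a (t - r) x)"
  using assms(2)
proof (induction r)
  case (Suc r)
  let ?D = "descendants N c dh t X"
  have "(\<Sum>x\<in>?D r. a (t - r) x) = card (?D r) + (\<Sum>x\<in>?D (Suc r). a (t - Suc r) x)"
    unfolding descendants.simps(2)
  proof (rule sum_children)
    show "finite (?D r)"
      by (rule finite_subset[OF descendants_subset[OF assms(1)]]) simp
  next
    fix x assume "x \<in> ?D r"
    then have "x < N" using descendants_subset[OF assms(1)] by blast
    then show "a (t - r) x =
      (\<Sum>j\<in>Cset N (c (t - Suc r)) (dh (t - Suc r)) (dh (t - r) x) x. a (t - Suc r) j) + 1"
      using step[of "t - Suc r" x] Suc.prems by (simp add: Suc_diff_Suc)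
  qed
  then show ?case using Suc by simp
qed simp

lemma sum_card_le_sum_card_swap:
  fixes N t :: nat
  assumes "\<And>q. q < t \<Longrightarrow> Z q \<subseteq> {x. x < N \<and> P (t - q) x}"
  shows "(\<Sum>q<t. card (Z q)) \<le> (\<Sum>x<N. card {s \<in> {1..t}. P s x})"
proof -
  have "(\<Sum>q<t. card (Z q)) \<le> (\<Sum>q<t. card {x \<in> {..<N}. P (t - q) x})"
  proof (rule sum_mono)
    fix q assume "q \<in> {..<t}"
    then show "card (Z q) \<le> card {x \<in> {..<N}. P (t - q) x}"
      using assms by (intro card_mono) auto
  qed
  also have "\<dots> = (\<Sum>s\<in>{1..t}. card {x \<in> {..<N}. P s x})"
    by (rule sum.reindex_bij_witness[of _ "\<lambda>s. t - s" "\<lambda>q. t - q"]) auto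
  also have "\<dots> = (\<Sum>s\<in>{1..t}. \<Sum>x<N. of_bool (P s x))"
    by (simp add: Int_def conj_commute)
  also have "\<dots> = (\<Sum>x<N. \<Sum>s\<in>{1..t}. of_bool (P s x))"
    by (rule sum.swap)
  also have "\<dots> = (\<Sum>x<N. card {s \<in> {1..t}. P s x})"
    by (simp add: Int_def conj_commute)
  finally show ?thesis .
qed

lemma steady_level_sum_le_card_deeper:
  fixes a c dh :: "nat \<Rightarrow> nat"
  assumes steady: "\<And>x. x < N \<Longrightarrow> a x = (\<Sum>j\<in>Cset N c dh (dh x) x. a j) + 1"
    and X: "X \<subseteq> {x. x < N \<and> dh x = M}"
  shows "(\<Sum>x\<in>X. a x) \<le> card {x. x < N \<and> M \<le> dh x}"
proof -
  \<comment> \<open>View the steady state as a run constant in time; its potential dh x + s is then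
    injective in s for every node.\<close>
  define T where "T = Suc (Max (dh ` {..<N}))"
  have below_T: "dh x < T" if "x < N" for x
    unfolding T_def using that by (simp add: le_imp_less_Suc)
  let ?D = "descendants N (\<lambda>_. c) (\<lambda>_. dh) T X"
  have XN: "X \<subseteq> {..<N}" using X by auto
  have level: "?D q \<subseteq> {x. x < N \<and> dh x + (T - q) = M + T}" if "q \<le> T" for q
    using descendants_potential[of X "\<lambda>_. dh" T "M + T" q N "\<lambda>_. c"]
      descendants_subset[OF XN, of "\<lambda>_. c" "\<lambda>_. dh" T q] X that
    by auto
  have "?D T = {}"
    using level[of T] below_T by fastforce
  then have "(\<Sum>x\<in>X. a x) = (\<Sum>q<T. card (?D q))"
    using sum_descendants[OF XN order_refl[of T],
        where a = "\<lambda>_. a" and c = "\<lambda>_. c" and dh = "\<lambda>_. dh"] steady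
    by simp
  also have "\<dots> \<le> (\<Sum>x<N. card {s \<in> {1..T}. dh x + s = M + T})"
    by (rule sum_card_le_sum_card_swap) (use level in auto)
  also have "\<dots> \<le> (\<Sum>x<N. of_bool (M \<le> dh x))"
  proof (rule sum_mono)
    fix x
    have "{s \<in> {1..T}. dh x + s = M + T} \<subseteq> (if M \<le> dh x then {M + T - dh x} else {})"
      by auto
    from card_mono[OF _ this] show "card {s \<in> {1..T}. dh x + s = M + T} \<le> of_bool (M \<le> dh x)"
      by (auto split: if_splits)
  qed
  also have "\<dots> = card {x. x < N \<and> M \<le> dh x}"
    by (simp add: Int_def)
  finally show ?thesis .
qed

lemma card_level_le_one:
  assumes "inj_on f A"
  shows "card {s \<in> A. f s = m} \<le> 1"
proof (cases "\<exists>s \<in> A. f s = m")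
  case True
  then obtain s0 where s0: "s0 \<in> A" "f s0 = m" by blast
  have "s = s0" if "s \<in> A" "f s = m" for s
    by (rule inj_onD[OF assms]) (use that s0 in auto)
  then have "{s \<in> A. f s = m} \<subseteq> {s0}" by blast
  then show ?thesis
    using card_mono[of "{s0}"] by simp
next
  case False
  then have "{s \<in> A. f s = m} = {}" by blast
  then show ?thesis by (metis card.empty le0)
qed

locale source_switch =
  fixes N :: nat and E :: "nat \<Rightarrow> nat \<Rightarrow> bool" and dh :: "nat \<Rightarrow> nat \<Rightarrow> nat"
  assumes graph: "conn_graph N E"
    and source_in_graph: "0 < N"
    and dh0_lipschitz: "\<And>x j. x < N \<Longrightarrow> E x j \<Longrightarrow> dh 0 x \<le> dh 0 j + 1"
    and dh_Suc_source: "\<And>t. dh (Suc t) 0 = 0"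
    and dh_Suc: "\<And>t x. x < N \<Longrightarrow> x \<noteq> 0 \<Longrightarrow> dh (Suc t) x = dupd E (dh t) x"
begin

lemma edge_in_graph: "E x j \<Longrightarrow> j < N"
  using graph unfolding conn_graph_def by blast

lemma nbrs_nonempty: "x < N \<Longrightarrow> x \<noteq> 0 \<Longrightarrow> nbrs E x \<noteq> {}"
  using hopdist_step[OF graph _ source_in_graph] unfolding nbrs_def by blast

lemma min_hopdist_le_dh: "x < N \<Longrightarrow> min (hopdist E x 0) t \<le> dh t x"
proof (induction t arbitrary: x)
  case (Suc t)
  show ?case
  proof (cases "x = 0")
    case False
    have "min (hopdist E x 0) (Suc t) \<le> dupd E (dh t) x"
    proof (rule le_dupd[OF graph nbrs_nonempty[OF Suc.prems False]])
      fix j assume "E x j"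
      then show "min (hopdist E x 0) (Suc t) \<le> dh t j + 1"
        using Suc.IH[OF edge_in_graph] hopdist_edge[OF graph _ source_in_graph] by fastforce
    qed
    then show ?thesis using dh_Suc Suc.prems False by simp
  qed simp
qed simp

lemma dh_le_hopdist: "x < N \<Longrightarrow> hopdist E x 0 \<le> t \<Longrightarrow> dh (Suc t) x \<le> hopdist E x 0"
proof (induction t arbitrary: x)
  case (Suc t)
  show ?case
  proof (cases "x = 0")
    case False
    obtain j where "E x j" and j: "hopdist E j 0 < hopdist E x 0"
      using hopdist_step[OF graph Suc.prems(1) source_in_graph False] .
    then have "dh (Suc t) j \<le> hopdist E j 0"
      using Suc edge_in_graph by auto
    then show ?thesis
      using dupd_le[OF graph \<open>E x j\<close>, of "dh (Suc t)"] dh_Suc Suc.prems(1) False j by simp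
  qed (simp add: dh_Suc_source)
next
  case 0
  then show ?case
    using hopdist_step[OF graph 0(1) source_in_graph] dh_Suc_source by (cases "x = 0") auto
qed

lemma dh_eq_hopdist: "x < N \<Longrightarrow> hopdist E x 0 < t \<Longrightarrow> dh t x = hopdist E x 0"
  using min_hopdist_le_dh[of x t] dh_le_hopdist[of x "t - 1"] by (cases t) auto

lemma dh_le_dh_Suc: "x < N \<Longrightarrow> Suc t \<le> hopdist E x 0 \<Longrightarrow> dh t x \<le> dh (Suc t) x"
proof (induction t arbitrary: x)
  case 0
  then have "x \<noteq> 0" by (cases "x = 0") auto
  then show ?case
    using le_dupd[OF graph nbrs_nonempty] dh0_lipschitz dh_Suc 0 by simp
next
  case (Suc t)
  then have "x \<noteq> 0" by (cases "x = 0") auto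
  have "dupd E (dh t) x \<le> dupd E (dh (Suc t)) x"
  proof (rule dupd_mono[OF graph nbrs_nonempty[OF Suc.prems(1) \<open>x \<noteq> 0\<close>]])
    fix j assume "E x j"
    then show "dh t j \<le> dh (Suc t) j"
      using Suc hopdist_edge[OF graph _ source_in_graph] edge_in_graph by fastforce
  qed
  then show ?case using dh_Suc Suc.prems \<open>x \<noteq> 0\<close> by simp
qed

lemma dh_mono:
  assumes "x < N" "s \<le> t" "t \<le> hopdist E x 0"
  shows "dh s x \<le> dh t x"
  using assms(2,3)
proof (induction t rule: dec_induct)
  case (step t)
  then show ?case using dh_le_dh_Suc[OF assms(1), of t] by simp
qed simp

lemma potential_inj_on_early:
  assumes "x < N"
  shows "inj_on (\<lambda>s. dh s x + s) {..hopdist E x 0}"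
proof (rule strict_mono_on_imp_inj_on, rule strict_mono_onI)
  fix r s assume "r \<in> {..hopdist E x 0}" "s \<in> {..hopdist E x 0}" "r < s"
  then show "dh r x + r < dh s x + s" using dh_mono[OF assms, of r s] by simp
qed

lemma potential_inj_on_late: "x < N \<Longrightarrow> inj_on (\<lambda>s. dh s x + s) {hopdist E x 0<..}"
  by (rule inj_onI) (simp add: dh_eq_hopdist)

lemma card_potential_level:
  assumes "x < N"
  shows "card {s \<in> {1..t}. dh s x + s = M} + of_bool (M \<le> dh 0 x) \<le> 2"
proof -
  define early where "early = {s \<in> {1..t} \<inter> {..hopdist E x 0}. dh s x + s = M}"
  define late where "late = {s \<in> {1..t} \<inter> {hopdist E x 0<..}. dh s x + s = M}"
  have "card early \<le> 1"
    unfolding early_def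
    by (rule card_level_le_one, rule inj_on_subset[OF potential_inj_on_early[OF assms]]) auto
  moreover have "card late \<le> 1"
    unfolding late_def
    by (rule card_level_le_one, rule inj_on_subset[OF potential_inj_on_late[OF assms]]) auto
  moreover have "{s \<in> {1..t}. dh s x + s = M} = early \<union> late"
    unfolding early_def late_def by auto
  then have "card {s \<in> {1..t}. dh s x + s = M} \<le> card early + card late"
    by (simp add: card_Un_le)
  moreover have "dh 0 x < M" if "s \<in> early" for s
    using that dh_mono[OF assms, of 0 s] unfolding early_def by auto
  ultimately show ?thesis
    by (cases "early = {}") auto
qed

theorem aggregate_le_twice_num_nodes:
  assumes a0_steady: "\<And>x. x < N \<Longrightarrow> a 0 x = (\<Sum>j\<in>Cset N (c 0) (dh 0) (dh 0 x) x. a 0 j) + 1"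
    and a_Suc: "\<And>t x. x < N \<Longrightarrow>
      a (Suc t) x = (\<Sum>j\<in>Cset N (c t) (dh t) (dh (Suc t) x) x. a t j) + 1"
    and "i < N"
  shows "a t i \<le> 2 * N"
proof -
  define M where "M = dh t i + t"
  let ?D = "descendants N c dh t {i}"
  have level: "?D q \<subseteq> {x. x < N \<and> dh (t - q) x + (t - q) = M}" if "q \<le> t" for q
    using descendants_potential[of "{i}" dh t M q N c] descendants_subset[of "{i}" N c dh t q]
      \<open>i < N\<close> that
    unfolding M_def by auto
  have "a t i = (\<Sum>q<t. card (?D q)) + (\<Sum>x\<in>?D t. a 0 x)"
    using sum_descendants[of "{i}" N t t a c dh] a_Suc \<open>i < N\<close> by simp
  also have "(\<Sum>q<t. card (?D q)) \<le> (\<Sum>x<N. card {s \<in> {1..t}. dh s x + s = M})"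
    by (rule sum_card_le_sum_card_swap) (use level in auto)
  also have "(\<Sum>x\<in>?D t. a 0 x) \<le> card {x. x < N \<and> M \<le> dh 0 x}"
    by (rule steady_level_sum_le_card_deeper[OF a0_steady]) (use level[of t] in auto)
  also have "\<dots> = (\<Sum>x<N. of_bool (M \<le> dh 0 x))"
    by (simp add: Int_def)
  also have "(\<Sum>x<N. card {s \<in> {1..t}. dh s x + s = M}) + \<dots> \<le> (\<Sum>x<N. 2)"
    unfolding sum.distrib[symmetric] by (rule sum_mono) (use card_potential_level[of _ t M] in simp)
  finally show ?thesis by simp
qed

end

theorem lemma5:
  fixes N D :: nat
    and E :: "nat \<Rightarrow> nat \<Rightarrow> bool"
    and dh :: "nat \<Rightarrow> nat \<Rightarrow> nat"   \<comment> \<open>dh t i = hat d_i(t)\<close>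
    and c :: "nat \<Rightarrow> nat \<Rightarrow> nat"    \<comment> \<open>c t i = c_i(t)\<close>
    and a :: "nat \<Rightarrow> nat \<Rightarrow> nat"    \<comment> \<open>a t i = a_i(t)\<close>
  assumes graph: "conn_graph N E"
    and D_gt: "D > 2"
    and D_max: "(MAX i\<in>{0..<N}. hopdist E i 0) = D - 1"
    and path_nodes: "\<forall>i\<le>D - 1. i < N \<and> hopdist E 0 i = i"
    and path_edges: "\<forall>i<D - 1. E i (i + 1)"
    \<comment> \<open>initial values: steady state for constant source set {D-1}\<close>
    and init_d: "\<forall>i<N. dh 0 i = (if i = D - 1 then 0 else dupd E (dh 0) i)"
    and init_c: "\<forall>i<N. if i = D - 1 then c 0 i = i
                   else c 0 i \<in> nbrs E i \<and> dh 0 (c 0 i) + 1 = dupd E (dh 0) i"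
    and init_a: "\<forall>i<N. a 0 i = (\<Sum>j\<in>Cset N (c 0) (dh 0) (dh 0 i) i. a 0 j) + 1"
    and init_dist: "\<forall>i<N. dh 0 i = hopdist E i (D - 1)"
    and init_shell: "\<forall>m::nat. (\<Sum>i\<in>{i. i < N \<and> hopdist E i (D - 1) = m}. a 0 i) \<le> N"
    \<comment> \<open>updates for t \<ge> 1 with source set {0}\<close>
    and upd_d: "\<forall>t\<ge>1. \<forall>i<N. dh t i = (if i = 0 then 0 else dupd E (dh (t - 1)) i)"
    and upd_c: "\<forall>t\<ge>1. \<forall>i<N. if i = 0 then c t i = i
                   else c t i \<in> nbrs E i \<and> dh (t - 1) (c t i) + 1 = dupd E (dh (t - 1)) i"
    and upd_a: "\<forall>t\<ge>1. \<forall>i<N.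
                 a t i = (\<Sum>j\<in>Cset N (c (t - 1)) (dh (t - 1)) (dh t i) i. a (t - 1) j) + 1"
  shows "\<forall>t\<ge>1. \<forall>i<N. hopdist E i 0 < t \<longrightarrow> a t i \<le> 2 * N"
proof -
  have "0 < N" using path_nodes by auto
  interpret source_switch N E dh
  proof
    fix x j assume "x < N" "E x j"
    then show "dh 0 x \<le> dh 0 j + 1"
      using init_d dupd_le[OF graph \<open>E x j\<close>, of "dh 0"] by (cases "x = D - 1") auto
  qed (use graph \<open>0 < N\<close> upd_d in auto)
  have "a t x \<le> 2 * N" if "x < N" for t x
  proof (rule aggregate_le_twice_num_nodes[of a c])
    fix s y assume "y < N"
    then show "a (Suc s) y = (\<Sum>j\<in>Cset N (c s) (dh s) (dh (Suc s) y) y. a s j) + 1"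
      using upd_a by simp
  qed (use init_a that in auto)
  then show ?thesis by blast
qed

end
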